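(* Let $\mu$ be a probability distribution on $(E,\mathscr{E})$, let $Q$ be an isometric involution of $L^{2}(\mu)$ given by a Markov kernel $Q$ on $E$ (i.e. $Qf(z)=\int f(z')Q(z,{\rm d}z')$) with $\mu Q=\mu$, and let $P_{1},P_{2}$ be $(\mu,Q)$-reversible Markov transition probabilities. Assume that either for every $z\in E$ and $A\in\mathscr{E}$, $P_{1}Q(z,A\cap\{z\}^{c})\geq P_{2}Q(z,A\cap\{z\}^{c})$, or for every $z\in E$ and $A\in\mathscr{E}$, $QP_{1}(z,A\cap\{z\}^{c})\geq QP_{2}(z,A\cap\{z\}^{c})$. Then for any $\lambda\in[0,1)$: for every $f\in L^{2}(\mu)$ with $Qf=f$, ${\rm var}_{\lambda}(f,P_{1})\leq{\rm var}_{\lambda}(f,P_{2})$, and for every $f\in L^{2}(\mu)$ with $Qf=-f$, ${\rm var}_{\lambda}(f,P_{1})\geq{\rm var}_{\lambda}(f,P_{2})$.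
   Context: $\langle f,g\rangle_{\mu}=\int fg\,{\rm d}\mu$. An isometric involution is a linear operator $Q$ on $L^{2}(\mu)$ with $\langle Qf,Qg\rangle_{\mu}=\langle f,g\rangle_{\mu}$ and $Q^{2}={\rm Id}$. Compositions of kernels: $T_{1}T_{2}(z,A)=\int T_{1}(z,{\rm d}z')T_{2}(z',A)$. $P$ is $(\mu,Q)$-reversible if $\langle Pf,g\rangle_{\mu}=\langle f,QPQg\rangle_{\mu}$ for all $f,g\in L^{2}(\mu)$. For $\lambda\in[0,1)$, $\bar f=f-\mu(f)$, ${\rm var}_{\lambda}(f,P)=\|\bar f\|_{\mu}^{2}+2\sum_{k\geq1}\lambda^{k}\langle\bar f,P^{k}\bar f\rangle_{\mu}$. *)

theory Defs
  imports "HOL-Probability.Probability"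
begin

definition markov_kernel :: "'a measure \<Rightarrow> ('a \<Rightarrow> 'a measure) \<Rightarrow> bool" where
  "markov_kernel M K \<longleftrightarrow> K \<in> measurable M (subprob_algebra M) \<and> (\<forall>z\<in>space M. prob_space (K z))"

definition kapp :: "('a \<Rightarrow> 'a measure) \<Rightarrow> ('a \<Rightarrow> real) \<Rightarrow> 'a \<Rightarrow> real" where
  "kapp K f = (\<lambda>z. \<integral>x. f x \<partial>K z)"

definition kcomp :: "('a \<Rightarrow> 'a measure) \<Rightarrow> ('a \<Rightarrow> 'a measure) \<Rightarrow> 'a \<Rightarrow> 'a measure" where
  "kcomp K1 K2 = (\<lambda>z. K1 z \<bind> K2)"

definition L2 :: "'a measure \<Rightarrow> ('a \<Rightarrow> real) \<Rightarrow> bool" where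
  "L2 mu f \<longleftrightarrow> f \<in> borel_measurable mu \<and> integrable mu (\<lambda>x. (f x)\<^sup>2)"

definition inner_mu :: "'a measure \<Rightarrow> ('a \<Rightarrow> real) \<Rightarrow> ('a \<Rightarrow> real) \<Rightarrow> real" where
  "inner_mu mu f g = (\<integral>x. f x * g x \<partial>mu)"

definition isometric_involution :: "'a measure \<Rightarrow> ('a \<Rightarrow> 'a measure) \<Rightarrow> bool" where
  "isometric_involution mu Q \<longleftrightarrow>
     (\<forall>f. L2 mu f \<longrightarrow> L2 mu (kapp Q f)) \<and>
     (\<forall>f g. L2 mu f \<longrightarrow> L2 mu g \<longrightarrow> inner_mu mu (kapp Q f) (kapp Q g) = inner_mu mu f g) \<and>
     (\<forall>f. L2 mu f \<longrightarrow> (AE z in mu. kapp Q (kapp Q f) z = f z))"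

definition muQ_reversible :: "'a measure \<Rightarrow> ('a \<Rightarrow> 'a measure) \<Rightarrow> ('a \<Rightarrow> 'a measure) \<Rightarrow> bool" where
  "muQ_reversible mu Q P \<longleftrightarrow>
     (\<forall>f g. L2 mu f \<longrightarrow> L2 mu g \<longrightarrow>
        inner_mu mu (kapp P f) g = inner_mu mu f (kapp Q (kapp P (kapp Q g))))"

definition var_lambda :: "'a measure \<Rightarrow> real \<Rightarrow> ('a \<Rightarrow> real) \<Rightarrow> ('a \<Rightarrow> 'a measure) \<Rightarrow> real" where
  "var_lambda mu lam f P =
     (let fb = (\<lambda>x. f x - (\<integral>y. f y \<partial>mu))
      in inner_mu mu fb fb + 2 * (\<Sum>k. lam ^ Suc k * inner_mu mu fb ((kapp P ^^ Suc k) fb)))"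

end

theory Submission
  imports Defs
begin

text \<open>
  Let Q f = s f with s = 1 or s = -1, and u = (I - lam P)^-1 f, so that for centred f
  var_lambda(f, P) = 2 <f, u> - <f, f>. Reversibility makes Q P self-adjoint, hence
  form P h w = s <h, Q (I - lam P) w> is symmetric and u is the critical point of
  saddle P m = 2 <f, m> - form P m m, with critical value <f, u>. As |<m, Q P m>| \<le> <m, m>,
  saddle P is convex along the (-s)-eigenspace of Q and concave along the s-eigenspace.
  Take (P_a, P_b) = (P1, P2) if s = 1 and (P2, P1) if s = -1. The point m with the s-component
  of u_a and the (-s)-component of u_b satisfies
  <f, u_a> \<le> saddle P_a m \<le> saddle P_b m \<le> <f, u_b>, where the middle inequality is
  s <m, Q P_a m> \<le> s <m, Q P_b m>. This comes from the off-diagonal hypothesis: for a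
  mu-invariant kernel K, <g, g> - <g, K g> is half the integral of (g y - g x)^2 K(x, dy) mu(dx),
  which does not see the diagonal; take K = Q P, or K = P Q and g = Q m.
  Since the resolvent is only available through its partial sums, the argument is run on these,
  with errors of order lam^n.
\<close>

section \<open>Square-integrable functions\<close>

lemma abs_mult_le_half_sum_squares: "\<bar>a * b\<bar> \<le> (a\<^sup>2 + b\<^sup>2) / (2::real)"
proof -
  have "0 \<le> (\<bar>a\<bar> - \<bar>b\<bar>)\<^sup>2" by simp
  then show ?thesis by (simp add: power2_diff abs_mult)
qed

lemma L2_measurable: "L2 M f \<Longrightarrow> f \<in> borel_measurable M"
  by (simp add: L2_def)

lemma (in finite_measure) L2_integrable: "L2 M f \<Longrightarrow> integrable M f"
  unfolding L2_def by (auto intro: square_integrable_imp_integrable)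

lemma L2_integrable_mult:
  assumes "L2 M f" "L2 M g"
  shows "integrable M (\<lambda>x. f x * g x)"
proof (rule Bochner_Integration.integrable_bound[where f="\<lambda>x. (f x)\<^sup>2 + (g x)\<^sup>2"])
  show "integrable M (\<lambda>x. (f x)\<^sup>2 + (g x)\<^sup>2)" "(\<lambda>x. f x * g x) \<in> borel_measurable M"
    using assms by (simp_all add: L2_def borel_measurable_times)
  have "\<bar>f x * g x\<bar> \<le> (f x)\<^sup>2 + (g x)\<^sup>2" for x
    using abs_mult_le_half_sum_squares[of "f x" "g x"] by simp
  then show "AE x in M. norm (f x * g x) \<le> norm ((f x)\<^sup>2 + (g x)\<^sup>2)" by simp
qed

lemma L2_add:
  assumes "L2 M f" "L2 M g"
  shows "L2 M (\<lambda>x. f x + g x)"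
proof -
  have "integrable M (\<lambda>x. (f x)\<^sup>2 + 2 * (f x * g x) + (g x)\<^sup>2)"
    using assms L2_integrable_mult[OF assms] by (simp add: L2_def)
  then show ?thesis using assms by (simp add: L2_def power2_sum algebra_simps borel_measurable_add)
qed

lemma L2_cmult: "L2 M f \<Longrightarrow> L2 M (\<lambda>x. c * f x)"
  by (simp add: L2_def power_mult_distrib borel_measurable_times)

lemma L2_diff:
  assumes "L2 M f" "L2 M g"
  shows "L2 M (\<lambda>x. f x - g x)"
  using L2_add[OF assms(1) L2_cmult[OF assms(2), of "-1"]] by simp

lemma L2_const: "finite_measure M \<Longrightarrow> L2 M (\<lambda>x. c)"
  by (simp add: L2_def finite_measure.integrable_const)

lemma L2_sum:
  assumes "\<And>k. L2 M (g k)"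
  shows "L2 M (\<lambda>x. \<Sum>k<(n::nat). g k x)"
proof (induction n)
  case 0
  then show ?case by (simp add: L2_def)
next
  case (Suc n)
  then show ?case using L2_add[OF Suc assms[of n]] by simp
qed

lemma inner_mu_commute: "inner_mu M f g = inner_mu M g f"
  by (simp add: inner_mu_def mult.commute)

lemma inner_mu_add_right:
  "L2 M f \<Longrightarrow> L2 M g \<Longrightarrow> L2 M h \<Longrightarrow>
    inner_mu M f (\<lambda>x. g x + h x) = inner_mu M f g + inner_mu M f h"
  by (simp add: inner_mu_def distrib_left L2_integrable_mult)

lemma inner_mu_add_left:
  "L2 M f \<Longrightarrow> L2 M g \<Longrightarrow> L2 M h \<Longrightarrow>
    inner_mu M (\<lambda>x. g x + h x) f = inner_mu M g f + inner_mu M h f"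
  by (simp add: inner_mu_commute[of M _ f] inner_mu_add_right)

lemma inner_mu_diff_right:
  "L2 M f \<Longrightarrow> L2 M g \<Longrightarrow> L2 M h \<Longrightarrow>
    inner_mu M f (\<lambda>x. g x - h x) = inner_mu M f g - inner_mu M f h"
  by (simp add: inner_mu_def right_diff_distrib L2_integrable_mult)

lemma inner_mu_cmult_right [simp]: "inner_mu M f (\<lambda>x. c * g x) = c * inner_mu M f g"
  by (simp add: inner_mu_def algebra_simps)

lemma inner_mu_cmult_left [simp]: "inner_mu M (\<lambda>x. c * g x) f = c * inner_mu M g f"
  by (simp add: inner_mu_def algebra_simps)

lemma inner_mu_minus [simp]: "inner_mu M (\<lambda>x. - f x) (\<lambda>x. - g x) = inner_mu M f g"
  by (simp add: inner_mu_def)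

lemma inner_mu_self_nonneg: "0 \<le> inner_mu M f f"
  by (simp add: inner_mu_def)

lemma inner_mu_cong_AE:
  assumes "L2 M f" "L2 M g" "L2 M f'" "L2 M g'"
    and "AE x in M. f x = f' x" "AE x in M. g x = g' x"
  shows "inner_mu M f g = inner_mu M f' g'"
  unfolding inner_mu_def using assms by (intro integral_cong_AE) (auto simp: L2_def)

lemma abs_inner_mu_le:
  assumes "L2 M f" "L2 M g"
  shows "\<bar>inner_mu M f g\<bar> \<le> (inner_mu M f f + inner_mu M g g) / 2"
proof -
  have "\<bar>inner_mu M f g\<bar> \<le> (\<integral>x. \<bar>f x * g x\<bar> \<partial>M)"
    unfolding inner_mu_def by (rule integral_abs_bound)
  also have "\<dots> \<le> (\<integral>x. (f x * f x + g x * g x) / 2 \<partial>M)"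
    using abs_mult_le_half_sum_squares
    by (intro integral_mono) (auto simp: L2_integrable_mult assms power2_eq_square)
  also have "\<dots> = (inner_mu M f f + inner_mu M g g) / 2"
    by (simp add: inner_mu_def L2_integrable_mult assms)
  finally show ?thesis .
qed

lemma inner_mu_add_self_le:
  assumes "L2 M f" "L2 M g"
  shows "inner_mu M (\<lambda>x. f x + g x) (\<lambda>x. f x + g x) \<le> 2 * inner_mu M f f + 2 * inner_mu M g g"
proof -
  have "inner_mu M (\<lambda>x. f x + g x) (\<lambda>x. f x + g x) = inner_mu M f f + 2 * inner_mu M f g + inner_mu M g g"
    using assms L2_add[OF assms]
    by (simp add: inner_mu_add_left inner_mu_add_right inner_mu_commute[of M g f])
  then show ?thesis using abs_inner_mu_le[OF assms] by (simp add: abs_le_iff)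
qed

lemma inner_mu_diff_self_le:
  assumes "L2 M f" "L2 M g"
  shows "inner_mu M (\<lambda>x. f x - g x) (\<lambda>x. f x - g x) \<le> 2 * inner_mu M f f + 2 * inner_mu M g g"
  using inner_mu_add_self_le[OF assms(1) L2_cmult[OF assms(2), of "-1"]] by simp

lemma inner_mu_sum_right:
  assumes "L2 M f" "\<And>k. L2 M (g k)"
  shows "inner_mu M f (\<lambda>x. \<Sum>k<(n::nat). c k * g k x) = (\<Sum>k<n. c k * inner_mu M f (g k))"
proof (induction n)
  case 0
  then show ?case by (simp add: inner_mu_def)
next
  case (Suc n)
  have "L2 M (\<lambda>x. \<Sum>k<n. c k * g k x)" by (intro L2_sum L2_cmult assms(2))
  then show ?case
    using Suc inner_mu_add_right[OF assms(1) _ L2_cmult[OF assms(2)]] by simp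
qed

section \<open>Integration against Markov kernels\<close>

lemma square_integral_le_integral_square:
  fixes g :: "'a \<Rightarrow> real"
  assumes "prob_space N" "integrable N g" "integrable N (\<lambda>x. (g x)\<^sup>2)"
  shows "(\<integral>x. g x \<partial>N)\<^sup>2 \<le> (\<integral>x. (g x)\<^sup>2 \<partial>N)"
proof -
  interpret prob_space N by fact
  have "0 \<le> variance g" by (simp add: integral_nonneg)
  then show ?thesis using assms by (simp add: variance_eq)
qed

lemma integral_square_diff_const:
  fixes g :: "'a \<Rightarrow> real"
  assumes "prob_space N" "integrable N g" "integrable N (\<lambda>x. (g x)\<^sup>2)"
  shows "integrable N (\<lambda>y. (g y - c)\<^sup>2)"
    and "(\<integral>y. (g y - c)\<^sup>2 \<partial>N) = (\<integral>y. (g y)\<^sup>2 \<partial>N) - 2 * c * (\<integral>y. g y \<partial>N) + c\<^sup>2"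
proof -
  interpret prob_space N by fact
  have "(\<lambda>y. (g y - c)\<^sup>2) = (\<lambda>y. (g y)\<^sup>2 - 2 * c * g y + c\<^sup>2)"
    by (simp add: power2_diff algebra_simps)
  then show "integrable N (\<lambda>y. (g y - c)\<^sup>2)"
    and "(\<integral>y. (g y - c)\<^sup>2 \<partial>N) = (\<integral>y. (g y)\<^sup>2 \<partial>N) - 2 * c * (\<integral>y. g y \<partial>N) + c\<^sup>2"
    using assms by (simp_all add: prob_space)
qed

lemma nn_integral_mono_off_point:
  assumes "finite_measure M1" "finite_measure M2" and sets: "sets M1 = sets N" "sets M2 = sets N"
    and x: "{x} \<in> sets N" and le: "\<forall>A\<in>sets N. measure M2 (A - {x}) \<le> measure M1 (A - {x})"
    and h: "h \<in> borel_measurable N" "h x = 0"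
  shows "(\<integral>\<^sup>+y. h y \<partial>M2) \<le> (\<integral>\<^sup>+y. h y \<partial>M1)"
proof -
  define S where "S = space N - {x}"
  have S: "S \<in> sets N" unfolding S_def using x by auto
  have restrict: "emeasure (density Mi (indicator S)) A = ennreal (measure Mi (A - {x}))"
    if "finite_measure Mi" "sets Mi = sets N" "A \<in> sets N" for Mi A
  proof -
    have "S \<inter> A = A - {x}" unfolding S_def using sets.sets_into_space[OF that(3)] by auto
    then show ?thesis
      using emeasure_restricted[of S Mi A] S that by (simp add: finite_measure.emeasure_eq_measure)
  qed
  have "emeasure (density M2 (indicator S)) A \<le> emeasure (density M1 (indicator S)) A" for A
  proof (cases "A \<in> sets N")
    case True
    then show ?thesis
      using restrict[OF assms(1) sets(1) True] restrict[OF assms(2) sets(2) True] le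
      by (simp add: ennreal_leI)
  qed (simp add: emeasure_notin_sets sets)
  then have density_le: "density M2 (indicator S) \<le> density M1 (indicator S)"
    using sets sets_eq_imp_space_eq[OF sets(1)] sets_eq_imp_space_eq[OF sets(2)]
    by (simp add: le_measure_iff le_fun_def)
  have nn_density: "(\<integral>\<^sup>+y. h y \<partial>density Mi (indicator S)) = (\<integral>\<^sup>+y. h y \<partial>Mi)"
    if "sets Mi = sets N" for Mi
  proof -
    have "(\<integral>\<^sup>+y. h y \<partial>density Mi (indicator S)) = (\<integral>\<^sup>+y. indicator S y * h y \<partial>Mi)"
      using h(1) S that by (intro nn_integral_density) (auto simp: measurable_cong_sets[OF that refl])
    also have "\<dots> = (\<integral>\<^sup>+y. h y \<partial>Mi)"
      by (rule nn_integral_cong) (use h(2) sets_eq_imp_space_eq[OF that] in \<open>auto simp: S_def indicator_def\<close>)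
    finally show ?thesis .
  qed
  show ?thesis
    using nn_integral_mono_measure[OF _ density_le, of h] nn_density sets by simp
qed

lemma integral_mono_off_point:
  fixes h :: "'a \<Rightarrow> real"
  assumes "finite_measure M1" "finite_measure M2" and sets: "sets M1 = sets N" "sets M2 = sets N"
    and x: "{x} \<in> sets N" and le: "\<forall>A\<in>sets N. measure M2 (A - {x}) \<le> measure M1 (A - {x})"
    and h: "h \<in> borel_measurable N" "\<And>y. 0 \<le> h y" "h x = 0"
    and integrable: "integrable M1 h" "integrable M2 h"
  shows "integral\<^sup>L M2 h \<le> integral\<^sup>L M1 h"
proof -
  have "(\<integral>\<^sup>+y. h y \<partial>M2) \<le> (\<integral>\<^sup>+y. h y \<partial>M1)"
    using h by (intro nn_integral_mono_off_point[OF assms(1-6)]) auto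
  moreover have "(\<integral>\<^sup>+y. h y \<partial>M1) < \<infinity>"
    using integrable(1) h(2) unfolding integrable_iff_bounded by simp
  ultimately have "enn2real (\<integral>\<^sup>+y. h y \<partial>M2) \<le> enn2real (\<integral>\<^sup>+y. h y \<partial>M1)"
    by (simp add: enn2real_mono)
  moreover have "h \<in> borel_measurable M1" "h \<in> borel_measurable M2"
    using h(1) by (simp_all add: measurable_cong_sets[OF sets(1) refl] measurable_cong_sets[OF sets(2) refl])
  ultimately show ?thesis
    using h(2) by (simp add: integral_eq_nn_integral)
qed

lemma bind_kernel_integral_nonneg:
  fixes g :: "'a \<Rightarrow> real"
  assumes K: "K \<in> measurable M (subprob_algebra N)" and ne: "space M \<noteq> {}"
    and g: "integrable (M \<bind> K) g" and nonneg: "\<And>x. 0 \<le> g x"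
  shows "AE z in M. integrable (K z) g"
    and "integrable M (\<lambda>z. \<integral>y. g y \<partial>K z)"
    and "(\<integral>y. g y \<partial>(M \<bind> K)) = (\<integral>z. (\<integral>y. g y \<partial>K z) \<partial>M)"
proof -
  have sets_bind: "sets (M \<bind> K) = sets N" by (rule sets_bind[OF sets_kernel[OF K] ne])
  have g_N: "g \<in> borel_measurable N"
    using borel_measurable_integrable[OF g] measurable_cong_sets[OF sets_bind refl] by blast
  have nn_bind: "(\<integral>\<^sup>+x. g x \<partial>(M \<bind> K)) = (\<integral>\<^sup>+z. (\<integral>\<^sup>+y. g y \<partial>K z) \<partial>M)"
    by (rule nn_integral_bind[OF _ K]) (use g_N in measurable)
  have finite: "(\<integral>\<^sup>+x. g x \<partial>(M \<bind> K)) < \<infinity>"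
    using g nonneg unfolding integrable_iff_bounded by simp
  have "AE z in M. (\<integral>\<^sup>+y. g y \<partial>K z) \<noteq> \<infinity>"
    by (rule nn_integral_PInf_AE, rule measurable_compose[OF K nn_integral_measurable_subprob_algebra])
       (use g_N finite nn_bind in auto)
  moreover have "g \<in> borel_measurable (K z)" if "z \<in> space M" for z
    using g_N measurable_cong_sets[OF sets_kernel[OF K that] refl] by blast
  ultimately show integrable: "AE z in M. integrable (K z) g"
    using nonneg by (auto simp: integrable_iff_bounded top.not_eq_extremum elim!: AE_mp intro!: AE_I2)
  have "AE z in M. ennreal (\<integral>y. g y \<partial>K z) = (\<integral>\<^sup>+y. g y \<partial>K z)"
    using integrable by eventually_elim (use nonneg in \<open>simp add: nn_integral_eq_integral\<close>)
  then have nn_eq: "(\<integral>\<^sup>+z. ennreal (\<integral>y. g y \<partial>K z) \<partial>M) = (\<integral>\<^sup>+x. g x \<partial>(M \<bind> K))"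
    using nn_bind by (simp add: nn_integral_cong_AE)
  have measurable: "(\<lambda>z. \<integral>y. g y \<partial>K z) \<in> borel_measurable M"
    by (rule measurable_compose[OF K integral_measurable_subprob_algebra]) (use g_N in measurable)
  show "integrable M (\<lambda>z. \<integral>y. g y \<partial>K z)"
    unfolding integrable_iff_bounded using measurable nonneg nn_eq finite
    by (simp add: integral_nonneg)
  have "(\<integral>y. g y \<partial>(M \<bind> K)) = enn2real (\<integral>\<^sup>+x. g x \<partial>(M \<bind> K))"
    using g_N by (intro integral_eq_nn_integral) (auto simp: nonneg measurable_cong_sets[OF sets_bind refl])
  also have "\<dots> = (\<integral>z. (\<integral>y. g y \<partial>K z) \<partial>M)"
    using measurable nn_eq by (subst integral_eq_nn_integral) (auto simp: nonneg integral_nonneg)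
  finally show "(\<integral>y. g y \<partial>(M \<bind> K)) = (\<integral>z. (\<integral>y. g y \<partial>K z) \<partial>M)" .
qed

lemma bind_kernel_integral:
  fixes g :: "'a \<Rightarrow> real"
  assumes K: "K \<in> measurable M (subprob_algebra N)" and ne: "space M \<noteq> {}"
    and g: "integrable (M \<bind> K) g"
  shows "AE z in M. integrable (K z) g"
    and "integrable M (\<lambda>z. \<integral>y. g y \<partial>K z)"
    and "(\<integral>y. g y \<partial>(M \<bind> K)) = (\<integral>z. (\<integral>y. g y \<partial>K z) \<partial>M)"
proof -
  define gp where "gp x = max (g x) 0" for x
  define gn where "gn x = max (- g x) 0" for x
  have g_split: "g = (\<lambda>x. gp x - gn x)" unfolding gp_def gn_def by auto
  have "integrable (M \<bind> K) gp" "integrable (M \<bind> K) gn" "\<And>x. 0 \<le> gp x" "\<And>x. 0 \<le> gn x"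
    unfolding gp_def gn_def using g by auto
  note pos = bind_kernel_integral_nonneg[OF K ne this(1,3)]
    and neg = bind_kernel_integral_nonneg[OF K ne this(2,4)]
  have integrable: "AE z in M. integrable (K z) gp \<and> integrable (K z) gn"
    using pos(1) neg(1) by eventually_elim auto
  then show "AE z in M. integrable (K z) g"
    by eventually_elim (simp add: g_split)
  have split_AE: "AE z in M. (\<integral>y. g y \<partial>K z) = (\<integral>y. gp y \<partial>K z) - (\<integral>y. gn y \<partial>K z)"
    using integrable by eventually_elim (simp add: g_split)
  have measurable: "(\<lambda>z. \<integral>y. g y \<partial>K z) \<in> borel_measurable M"
  proof (rule measurable_compose[OF K integral_measurable_subprob_algebra])
    show "g \<in> borel_measurable N"
      using borel_measurable_integrable[OF g] sets_bind[OF sets_kernel[OF K] ne]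
      by (simp cong: measurable_cong_sets)
  qed
  show "integrable M (\<lambda>z. \<integral>y. g y \<partial>K z)"
    by (rule integrable_cong_AE_imp[OF Bochner_Integration.integrable_diff[OF pos(2) neg(2)] measurable])
       (use split_AE in \<open>auto elim: AE_mp\<close>)
  have "(\<integral>y. g y \<partial>(M \<bind> K)) = (\<integral>z. (\<integral>y. gp y \<partial>K z) \<partial>M) - (\<integral>z. (\<integral>y. gn y \<partial>K z) \<partial>M)"
    using pos(3) neg(3) \<open>integrable (M \<bind> K) gp\<close> \<open>integrable (M \<bind> K) gn\<close> by (simp add: g_split)
  also have "\<dots> = (\<integral>z. (\<integral>y. gp y \<partial>K z) - (\<integral>y. gn y \<partial>K z) \<partial>M)"
    using pos(2) neg(2) by simp
  also have "\<dots> = (\<integral>z. (\<integral>y. g y \<partial>K z) \<partial>M)"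
    by (rule integral_cong_AE) (use split_AE measurable pos(2) neg(2) in \<open>auto elim: AE_mp\<close>)
  finally show "(\<integral>y. g y \<partial>(M \<bind> K)) = (\<integral>z. (\<integral>y. g y \<partial>K z) \<partial>M)" .
qed

definition invariant_kernel :: "'a measure \<Rightarrow> ('a \<Rightarrow> 'a measure) \<Rightarrow> bool" where
  "invariant_kernel M K \<longleftrightarrow> markov_kernel M K \<and> M \<bind> K = M"

lemma markov_kernel_measurable: "markov_kernel M K \<Longrightarrow> K \<in> measurable M (subprob_algebra M)"
  by (simp add: markov_kernel_def)

lemma markov_kernel_space:
  assumes "markov_kernel M K" "z \<in> space M"
  shows "space (K z) = space M" "sets (K z) = sets M" "prob_space (K z)"
  using assms subprob_measurableD[of K M M z] by (auto simp: markov_kernel_def)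

lemma markov_kernel_borel_measurable:
  assumes "markov_kernel M K" "z \<in> space M" "g \<in> borel_measurable M"
  shows "g \<in> borel_measurable (K z)"
  using assms(3) by (simp add: measurable_cong_sets[OF markov_kernel_space(2)[OF assms(1,2)] refl])

lemma kapp_measurable:
  assumes "markov_kernel M K" "g \<in> borel_measurable M"
  shows "kapp K g \<in> borel_measurable M"
  unfolding kapp_def
  by (rule measurable_compose[OF markov_kernel_measurable[OF assms(1)] integral_measurable_subprob_algebra])
     (use assms(2) in measurable)

lemma kapp_cmult [simp]: "kapp K (\<lambda>x. c * g x) = (\<lambda>z. c * kapp K g z)"
  by (simp add: kapp_def)

lemma kapp_eq_const:
  assumes "markov_kernel M K" "z \<in> space M" "\<And>y. y \<in> space M \<Longrightarrow> h y = c"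
  shows "kapp K h z = c"
proof -
  interpret prob_space "K z" using markov_kernel_space(3)[OF assms(1,2)] .
  have "kapp K h z = (\<integral>y. c \<partial>K z)"
    unfolding kapp_def using assms markov_kernel_space(1)[OF assms(1,2)]
    by (intro Bochner_Integration.integral_cong) auto
  then show ?thesis by (simp add: prob_space)
qed

lemma kapp_indicator:
  assumes "markov_kernel M K" "z \<in> space M" "A \<in> sets M"
  shows "kapp K (indicator A) z = measure (K z) A"
proof -
  interpret prob_space "K z" using markov_kernel_space(3)[OF assms(1,2)] .
  show ?thesis
    unfolding kapp_def using assms(3) markov_kernel_space(2)[OF assms(1,2)] by simp
qed

lemma emeasure_bind_markov_kernel:
  assumes K: "markov_kernel M K" and ne: "space M \<noteq> {}" and A: "A \<in> sets M"
  shows "emeasure (M \<bind> K) A = (\<integral>\<^sup>+z. measure (K z) A \<partial>M)"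
proof -
  have "emeasure (M \<bind> K) A = (\<integral>\<^sup>+z. emeasure (K z) A \<partial>M)"
    by (rule emeasure_bind[OF ne markov_kernel_measurable[OF K] A])
  also have "\<dots> = (\<integral>\<^sup>+z. measure (K z) A \<partial>M)"
    using markov_kernel_space(3)[OF K]
    by (intro nn_integral_cong) (simp add: finite_measure.emeasure_eq_measure[OF prob_space.finite_measure])
  finally show ?thesis .
qed

context prob_space
begin

lemma
  assumes K: "invariant_kernel M K" and g: "integrable M g"
  shows AE_integrable_kernel: "AE z in M. integrable (K z) g"
    and integrable_kapp: "integrable M (kapp K g)"
    and integral_kapp: "integral\<^sup>L M (kapp K g) = integral\<^sup>L M g"
proof -
  have "K \<in> measurable M (subprob_algebra M)" "M \<bind> K = M"
    using K by (simp_all add: invariant_kernel_def markov_kernel_def)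
  note bind = bind_kernel_integral[OF this(1) not_empty, unfolded this(2), OF g]
  show "AE z in M. integrable (K z) g" "integrable M (kapp K g)"
    "integral\<^sup>L M (kapp K g) = integral\<^sup>L M g"
    using bind by (simp_all add: kapp_def)
qed

lemma kapp_cong_AE:
  assumes K: "invariant_kernel M K" and "g \<in> borel_measurable M" "h \<in> borel_measurable M"
    and eq: "AE x in M. g x = h x"
  shows "AE z in M. kapp K g z = kapp K h z"
proof -
  have K_measurable: "K \<in> measurable M (subprob_algebra M)" and bind: "M \<bind> K = M"
    using K by (simp_all add: invariant_kernel_def markov_kernel_def)
  have "Measurable.pred M (\<lambda>x. g x = h x)" using assms(2,3) by measurable
  then have "AE z in M. AE y in K z. g y = h y"
    using eq AE_bind[OF K_measurable] bind by metis
  then show ?thesis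
    using AE_space
  proof eventually_elim
    case (elim z)
    have "markov_kernel M K" using K by (simp add: invariant_kernel_def)
    then show ?case
      unfolding kapp_def using elim markov_kernel_borel_measurable assms(2,3)
      by (intro integral_cong_AE) auto
  qed
qed

lemma kapp_add_AE:
  assumes "invariant_kernel M K" "integrable M g" "integrable M h"
  shows "AE z in M. kapp K (\<lambda>x. g x + h x) z = kapp K g z + kapp K h z"
  using AE_integrable_kernel[OF assms(1,2)] AE_integrable_kernel[OF assms(1,3)]
  by eventually_elim (simp add: kapp_def)

lemma kapp_diff_AE:
  assumes "invariant_kernel M K" "integrable M g" "integrable M h"
  shows "AE z in M. kapp K (\<lambda>x. g x - h x) z = kapp K g z - kapp K h z"
  using AE_integrable_kernel[OF assms(1,2)] AE_integrable_kernel[OF assms(1,3)]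
  by eventually_elim (simp add: kapp_def)

lemma
  assumes K: "invariant_kernel M K" and g: "L2 M g"
  shows L2_kapp: "L2 M (kapp K g)"
    and kapp_norm_le: "inner_mu M (kapp K g) (kapp K g) \<le> inner_mu M g g"
proof -
  have K_markov: "markov_kernel M K" using K by (simp add: invariant_kernel_def)
  have g_square: "integrable M (\<lambda>x. (g x)\<^sup>2)" and g_measurable: "g \<in> borel_measurable M"
    using g by (simp_all add: L2_def)
  have jensen: "AE z in M. (kapp K g z)\<^sup>2 \<le> kapp K (\<lambda>x. (g x)\<^sup>2) z"
    using AE_space AE_integrable_kernel[OF K g_square]
  proof eventually_elim
    case (elim z)
    interpret Kz: prob_space "K z" using markov_kernel_space(3)[OF K_markov elim(1)] .
    have "integrable (K z) g"
      using markov_kernel_borel_measurable[OF K_markov elim(1) g_measurable] elim(2)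
      by (rule Kz.square_integrable_imp_integrable)
    then show ?case
      unfolding kapp_def by (rule square_integral_le_integral_square[OF Kz.prob_space_axioms _ elim(2)])
  qed
  have kapp_square: "integrable M (\<lambda>z. (kapp K g z)\<^sup>2)"
  proof (rule Bochner_Integration.integrable_bound[OF integrable_kapp[OF K g_square]])
    show "(\<lambda>z. (kapp K g z)\<^sup>2) \<in> borel_measurable M"
      using kapp_measurable[OF K_markov g_measurable] by measurable
    show "AE z in M. norm ((kapp K g z)\<^sup>2) \<le> norm (kapp K (\<lambda>x. (g x)\<^sup>2) z)"
      using jensen by eventually_elim auto
  qed
  then show "L2 M (kapp K g)"
    using kapp_measurable[OF K_markov g_measurable] by (simp add: L2_def)
  have "inner_mu M (kapp K g) (kapp K g) = (\<integral>z. (kapp K g z)\<^sup>2 \<partial>M)"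
    by (simp add: inner_mu_def power2_eq_square)
  also have "\<dots> \<le> (\<integral>z. kapp K (\<lambda>x. (g x)\<^sup>2) z \<partial>M)"
    by (rule integral_mono_AE[OF kapp_square integrable_kapp[OF K g_square] jensen])
  also have "\<dots> = inner_mu M g g"
    using integral_kapp[OF K g_square] by (simp add: inner_mu_def power2_eq_square)
  finally show "inner_mu M (kapp K g) (kapp K g) \<le> inner_mu M g g" .
qed

lemma
  assumes "invariant_kernel M K" "L2 M g"
  shows L2_funpow_kapp: "L2 M ((kapp K ^^ n) g)"
    and funpow_kapp_norm_le: "inner_mu M ((kapp K ^^ n) g) ((kapp K ^^ n) g) \<le> inner_mu M g g"
proof (induction n)
  case (Suc n)
  { case 1 show ?case using L2_kapp[OF assms(1) Suc.IH(1)] by simp }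
  { case 2 show ?case using kapp_norm_le[OF assms(1) Suc.IH(1)] Suc.IH(2) by simp }
qed (use assms(2) in simp_all)

lemma L2_indicator:
  assumes "A \<in> sets M"
  shows "L2 M (indicator A)"
proof -
  have "(\<lambda>x. (indicator A x :: real)\<^sup>2) = indicator A"
    by (auto simp: indicator_def)
  moreover have "integrable M (indicator A :: 'a \<Rightarrow> real)"
    using assms emeasure_finite[of A, unfolded less_top] by (intro integrable_real_indicator) auto
  ultimately show ?thesis using assms by (simp add: L2_def)
qed

lemma reversible_imp_invariant:
  assumes Q: "markov_kernel M Q" and P: "markov_kernel M P" and reversible: "muQ_reversible M Q P"
  shows "invariant_kernel M P"
proof -
  have "emeasure (M \<bind> P) A = emeasure M A" if A: "A \<in> sets M" for A
  proof -
    have QPQ_one: "kapp Q (kapp P (kapp Q (\<lambda>x. 1))) y = 1" if "y \<in> space M" for y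
      using kapp_eq_const[OF Q] kapp_eq_const[OF P] that by metis
    have "(\<integral>z. measure (P z) A \<partial>M) = inner_mu M (kapp P (indicator A)) (\<lambda>x. 1)"
      unfolding inner_mu_def using kapp_indicator[OF P _ A] by (intro Bochner_Integration.integral_cong) auto
    also have "\<dots> = inner_mu M (indicator A) (kapp Q (kapp P (kapp Q (\<lambda>x. 1))))"
      using reversible L2_indicator[OF A] L2_const[OF finite_measure_axioms]
      unfolding muQ_reversible_def by blast
    also have "\<dots> = measure M A"
      unfolding inner_mu_def using QPQ_one A by (simp cong: Bochner_Integration.integral_cong)
    finally have mass: "(\<integral>z. measure (P z) A \<partial>M) = measure M A" .
    have "(\<lambda>z. measure (P z) A) \<in> borel_measurable M"
      using markov_kernel_measurable[OF P] A by (simp add: measure_def)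
    then have "integrable M (\<lambda>z. measure (P z) A)"
      using markov_kernel_space(3)[OF P]
      by (intro integrable_const_bound[where B=1]) (auto intro!: AE_I2 prob_space.prob_le_1)
    then show ?thesis
      using emeasure_bind_markov_kernel[OF P not_empty A] mass
      by (simp add: nn_integral_eq_integral emeasure_eq_measure)
  qed
  then show ?thesis
    using P sets_bind[OF sets_kernel[OF markov_kernel_measurable[OF P]] not_empty]
    by (auto simp: invariant_kernel_def intro: measure_eqI)
qed

lemma kcomp_invariant:
  assumes K1: "invariant_kernel M K1" and K2: "invariant_kernel M K2"
  shows "invariant_kernel M (kcomp K1 K2)"
proof -
  have markov: "markov_kernel M K1" "markov_kernel M K2"
    using K1 K2 by (simp_all add: invariant_kernel_def)
  note K1_measurable = markov_kernel_measurable[OF markov(1)]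
    and K2_measurable = markov_kernel_measurable[OF markov(2)]
  have "kcomp K1 K2 \<in> measurable M (subprob_algebra M)"
    unfolding kcomp_def by (rule measurable_bind2[OF K1_measurable K2_measurable])
  moreover have "prob_space (kcomp K1 K2 z)" if z: "z \<in> space M" for z
  proof -
    interpret K1z: prob_space "K1 z" using markov_kernel_space(3)[OF markov(1) z] .
    have "K2 \<in> measurable (K1 z) (subprob_algebra M)"
      using K2_measurable by (simp add: measurable_cong_sets[OF markov_kernel_space(2)[OF markov(1) z] refl])
    then show ?thesis
      unfolding kcomp_def
      using markov_kernel_space(3)[OF markov(2)] markov_kernel_space(1)[OF markov(1) z]
      by (intro K1z.prob_space_bind AE_I2) auto
  qed
  moreover have "M \<bind> kcomp K1 K2 = (M \<bind> K1) \<bind> K2"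
    unfolding kcomp_def by (rule bind_assoc[OF K1_measurable K2_measurable, symmetric])
  ultimately show ?thesis
    using K1 K2 by (simp add: invariant_kernel_def markov_kernel_def)
qed

lemma kapp_kcomp_AE:
  assumes K1: "invariant_kernel M K1" and K2: "invariant_kernel M K2" and g: "integrable M g"
  shows "AE z in M. kapp (kcomp K1 K2) g z = kapp K1 (kapp K2 g) z"
  using AE_space AE_integrable_kernel[OF kcomp_invariant[OF K1 K2] g]
proof eventually_elim
  case (elim z)
  have markov: "markov_kernel M K1" "markov_kernel M K2"
    using K1 K2 by (simp_all add: invariant_kernel_def)
  have "K2 \<in> measurable (K1 z) (subprob_algebra M)"
    using markov_kernel_measurable[OF markov(2)]
    by (simp add: measurable_cong_sets[OF markov_kernel_space(2)[OF markov(1) elim(1)] refl])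
  moreover have "space (K1 z) \<noteq> {}"
    using markov_kernel_space(1)[OF markov(1) elim(1)] not_empty by simp
  ultimately show ?case
    using bind_kernel_integral(3)[of K2 "K1 z" M g] elim(2) by (simp add: kapp_def kcomp_def)
qed

lemma inner_kapp_kcomp:
  assumes K1: "invariant_kernel M K1" and K2: "invariant_kernel M K2" and "L2 M g" "L2 M h"
  shows "inner_mu M h (kapp (kcomp K1 K2) g) = inner_mu M h (kapp K1 (kapp K2 g))"
proof (rule inner_mu_cong_AE)
  show "L2 M (kapp (kcomp K1 K2) g)" by (rule L2_kapp[OF kcomp_invariant[OF K1 K2] assms(3)])
  show "L2 M (kapp K1 (kapp K2 g))" by (rule L2_kapp[OF K1 L2_kapp[OF K2 assms(3)]])
  show "AE x in M. kapp (kcomp K1 K2) g x = kapp K1 (kapp K2 g) x"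
    by (rule kapp_kcomp_AE[OF K1 K2 L2_integrable[OF assms(3)]])
qed (use assms(4) in simp_all)

lemma inner_kapp_le_if_offdiag_ge:
  assumes K1: "invariant_kernel M K1" and K2: "invariant_kernel M K2"
    and singleton: "\<forall>z\<in>space M. {z} \<in> sets M"
    and offdiag: "\<forall>z\<in>space M. \<forall>A\<in>sets M. measure (K1 z) (A - {z}) \<ge> measure (K2 z) (A - {z})"
    and g: "L2 M g"
  shows "inner_mu M g (kapp K1 g) \<le> inner_mu M g (kapp K2 g)"
proof -
  have g_integrable: "integrable M g" and g_square: "integrable M (\<lambda>x. (g x)\<^sup>2)"
    using L2_integrable[OF g] g by (simp_all add: L2_def)
  define E where "E K = (\<lambda>z. kapp K (\<lambda>x. (g x)\<^sup>2) z - 2 * (g z * kapp K g z))" for K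
  have integral_E: "integrable M (E K) \<and>
      integral\<^sup>L M (E K) = inner_mu M g g - 2 * inner_mu M g (kapp K g)"
    if K: "invariant_kernel M K" for K
    using integrable_kapp[OF K g_square] integral_kapp[OF K g_square]
      L2_integrable_mult[OF g L2_kapp[OF K g]]
    by (simp add: E_def inner_mu_def power2_eq_square)
  \<comment> \<open>E K z + (g z)^2 is the integral of (g y - g z)^2 against K z, which vanishes for y = z.\<close>
  have "AE z in M. E K2 z \<le> E K1 z"
    using AE_space AE_integrable_kernel[OF K1 g_integrable] AE_integrable_kernel[OF K1 g_square]
      AE_integrable_kernel[OF K2 g_integrable] AE_integrable_kernel[OF K2 g_square]
  proof eventually_elim
    case (elim z)
    have markov: "markov_kernel M K1" "markov_kernel M K2"
      using K1 K2 by (simp_all add: invariant_kernel_def)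
    note K1z = markov_kernel_space[OF markov(1) elim(1)]
      and K2z = markov_kernel_space[OF markov(2) elim(1)]
    note square1 = integral_square_diff_const[OF K1z(3) elim(2,3), of "g z"]
      and square2 = integral_square_diff_const[OF K2z(3) elim(4,5), of "g z"]
    have "(\<lambda>y. (g y - g z)\<^sup>2) \<in> borel_measurable M"
      using L2_measurable[OF g] by measurable
    moreover have "{z} \<in> sets M" "\<forall>A\<in>sets M. measure (K2 z) (A - {z}) \<le> measure (K1 z) (A - {z})"
      using singleton offdiag elim(1) by auto
    ultimately have "(\<integral>y. (g y - g z)\<^sup>2 \<partial>K2 z) \<le> (\<integral>y. (g y - g z)\<^sup>2 \<partial>K1 z)"
      by (intro integral_mono_off_point[OF prob_space.finite_measure[OF K1z(3)]
            prob_space.finite_measure[OF K2z(3)] K1z(2) K2z(2) _ _ _ _ _ square1(1) square2(1)]) auto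
    then show ?case
      using square1(2) square2(2) by (simp add: E_def kapp_def)
  qed
  then have "integral\<^sup>L M (E K2) \<le> integral\<^sup>L M (E K1)"
    using integral_E[OF K1] integral_E[OF K2] by (intro integral_mono_AE) auto
  then show ?thesis
    using integral_E[OF K1] integral_E[OF K2] by simp
qed

end

section \<open>Kernels reversible with respect to an involution\<close>

locale involution_kernel = prob_space M for M :: "'a measure" +
  fixes Q :: "'a \<Rightarrow> 'a measure"
  assumes Q_invariant: "invariant_kernel M Q" and Q_involution: "isometric_involution M Q"
begin

lemma L2_Q: "L2 M f \<Longrightarrow> L2 M (kapp Q f)"
  using Q_involution by (simp add: isometric_involution_def)

lemma Q_Q_AE: "L2 M f \<Longrightarrow> AE z in M. kapp Q (kapp Q f) z = f z"
  using Q_involution by (simp add: isometric_involution_def)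

lemma inner_Q_Q: "L2 M f \<Longrightarrow> L2 M g \<Longrightarrow> inner_mu M (kapp Q f) (kapp Q g) = inner_mu M f g"
  using Q_involution by (simp add: isometric_involution_def)

lemma inner_Q_swap:
  assumes "L2 M f" "L2 M g"
  shows "inner_mu M (kapp Q f) g = inner_mu M f (kapp Q g)"
proof -
  have "inner_mu M (kapp Q f) g = inner_mu M (kapp Q f) (kapp Q (kapp Q g))"
    using assms L2_Q Q_Q_AE[OF assms(2)] by (intro inner_mu_cong_AE) (auto simp: eq_commute)
  also have "\<dots> = inner_mu M f (kapp Q g)"
    using assms by (intro inner_Q_Q L2_Q)
  finally show ?thesis .
qed

definition reversible :: "('a \<Rightarrow> 'a measure) \<Rightarrow> bool" where
  "reversible P \<longleftrightarrow> markov_kernel M P \<and> muQ_reversible M Q P"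

lemma reversible_invariant: "reversible P \<Longrightarrow> invariant_kernel M P"
  using Q_invariant by (intro reversible_imp_invariant[of Q]) (simp_all add: reversible_def invariant_kernel_def)

lemma inner_QP_commute:
  assumes P: "reversible P" and h: "L2 M h" and w: "L2 M w"
  shows "inner_mu M h (kapp Q (kapp P w)) = inner_mu M w (kapp Q (kapp P h))"
proof -
  note P_invariant = reversible_invariant[OF P]
  have QQh: "L2 M (kapp Q (kapp Q h))" using h by (intro L2_Q)
  have "inner_mu M h (kapp Q (kapp P w)) = inner_mu M (kapp P w) (kapp Q h)"
    using inner_Q_swap[OF h L2_kapp[OF P_invariant w]] by (simp add: inner_mu_commute)
  also have "\<dots> = inner_mu M w (kapp Q (kapp P (kapp Q (kapp Q h))))"
    using P w L2_Q[OF h] by (simp add: reversible_def muQ_reversible_def)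
  also have "\<dots> = inner_mu M w (kapp Q (kapp P h))"
  proof -
    have "AE z in M. kapp P (kapp Q (kapp Q h)) z = kapp P h z"
      using Q_Q_AE[OF h] QQh h by (intro kapp_cong_AE[OF P_invariant] L2_measurable)
    then have "AE z in M. kapp Q (kapp P (kapp Q (kapp Q h))) z = kapp Q (kapp P h) z"
      using QQh h by (intro kapp_cong_AE[OF Q_invariant] L2_measurable L2_kapp[OF P_invariant])
    then show ?thesis
      using w QQh h by (intro inner_mu_cong_AE L2_Q L2_kapp[OF P_invariant]) auto
  qed
  finally show ?thesis .
qed

lemma abs_inner_QP_le:
  assumes P: "reversible P" and g: "L2 M g"
  shows "\<bar>inner_mu M g (kapp Q (kapp P g))\<bar> \<le> inner_mu M g g"
proof -
  note P_invariant = reversible_invariant[OF P]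
  have "inner_mu M g (kapp Q (kapp P g)) = inner_mu M (kapp Q g) (kapp P g)"
    using inner_Q_swap[OF g L2_kapp[OF P_invariant g]] by simp
  then show ?thesis
    using abs_inner_mu_le[OF L2_Q[OF g] L2_kapp[OF P_invariant g]] inner_Q_Q[OF g g]
      kapp_norm_le[OF P_invariant g] by (auto simp: abs_le_iff)
qed

lemma inner_QP_mono_PQ:
  assumes P1: "reversible P1" and P2: "reversible P2" and singleton: "\<forall>z\<in>space M. {z} \<in> sets M"
    and offdiag: "\<forall>z\<in>space M. \<forall>A\<in>sets M.
      measure (kcomp P1 Q z) (A - {z}) \<ge> measure (kcomp P2 Q z) (A - {z})"
    and m: "L2 M m"
  shows "inner_mu M m (kapp Q (kapp P1 m)) \<le> inner_mu M m (kapp Q (kapp P2 m))"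
proof -
  have Qm: "L2 M (kapp Q m)" by (rule L2_Q[OF m])
  have "inner_mu M (kapp Q m) (kapp (kcomp P Q) (kapp Q m)) = inner_mu M m (kapp Q (kapp P m))"
    if P: "reversible P" for P
  proof -
    note P_invariant = reversible_invariant[OF P]
    have "inner_mu M (kapp Q m) (kapp (kcomp P Q) (kapp Q m)) = inner_mu M (kapp Q m) (kapp P (kapp Q (kapp Q m)))"
      by (rule inner_kapp_kcomp[OF P_invariant Q_invariant Qm Qm])
    also have "\<dots> = inner_mu M (kapp Q m) (kapp P m)"
      using Q_Q_AE[OF m] Qm m
      by (intro inner_mu_cong_AE kapp_cong_AE[OF P_invariant] L2_kapp[OF P_invariant] L2_Q L2_measurable) auto
    also have "\<dots> = inner_mu M m (kapp Q (kapp P m))"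
      by (rule inner_Q_swap[OF m L2_kapp[OF P_invariant m]])
    finally show ?thesis .
  qed
  moreover have "inner_mu M (kapp Q m) (kapp (kcomp P1 Q) (kapp Q m))
      \<le> inner_mu M (kapp Q m) (kapp (kcomp P2 Q) (kapp Q m))"
    using reversible_invariant[OF P1] reversible_invariant[OF P2] Q_invariant
    by (intro inner_kapp_le_if_offdiag_ge[OF _ _ singleton offdiag Qm] kcomp_invariant)
  ultimately show ?thesis using P1 P2 by simp
qed

lemma inner_QP_mono_QP:
  assumes P1: "reversible P1" and P2: "reversible P2" and singleton: "\<forall>z\<in>space M. {z} \<in> sets M"
    and offdiag: "\<forall>z\<in>space M. \<forall>A\<in>sets M.
      measure (kcomp Q P1 z) (A - {z}) \<ge> measure (kcomp Q P2 z) (A - {z})"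
    and m: "L2 M m"
  shows "inner_mu M m (kapp Q (kapp P1 m)) \<le> inner_mu M m (kapp Q (kapp P2 m))"
proof -
  note P1_invariant = reversible_invariant[OF P1] and P2_invariant = reversible_invariant[OF P2]
  have "inner_mu M m (kapp (kcomp Q P1) m) \<le> inner_mu M m (kapp (kcomp Q P2) m)"
    using P1_invariant P2_invariant Q_invariant
    by (intro inner_kapp_le_if_offdiag_ge[OF _ _ singleton offdiag m] kcomp_invariant)
  then show ?thesis
    using inner_kapp_kcomp[OF Q_invariant P1_invariant m m] inner_kapp_kcomp[OF Q_invariant P2_invariant m m]
    by simp
qed

definition eigen_part :: "real \<Rightarrow> ('a \<Rightarrow> real) \<Rightarrow> 'a \<Rightarrow> real" where
  "eigen_part c w = (\<lambda>x. (w x + c * kapp Q w x) / 2)"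

lemma L2_eigen_part:
  assumes "L2 M w"
  shows "L2 M (eigen_part c w)"
proof -
  have "L2 M (\<lambda>x. 1/2 * (w x + c * kapp Q w x))"
    using assms by (intro L2_cmult L2_add L2_Q)
  then show ?thesis by (simp add: eigen_part_def)
qed

lemma eigen_part_split: "w x = eigen_part c w x + eigen_part (- c) w x"
  by (simp add: eigen_part_def field_simps)

lemma kapp_Q_eigen_part:
  assumes w: "L2 M w" and c: "c * c = 1"
  shows "AE x in M. kapp Q (eigen_part c w) x = c * eigen_part c w x"
  using kapp_add_AE[OF Q_invariant L2_integrable[OF w] L2_integrable[OF L2_cmult[OF L2_Q[OF w], where c=c]]]
    Q_Q_AE[OF w]
proof eventually_elim
  case (elim x)
  have "kapp Q (eigen_part c w) x = (kapp Q w x + c * w x) / 2"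
    using elim kapp_cmult[of Q "1/2" "\<lambda>x. w x + c * kapp Q w x"] by (simp add: eigen_part_def)
  also have "\<dots> = (c * w x + (c * c) * kapp Q w x) / 2"
    using c by simp
  also have "\<dots> = c * eigen_part c w x"
    by (simp add: eigen_part_def algebra_simps)
  finally show ?case .
qed

lemma eigen_part_norm_le:
  assumes w: "L2 M w" and c: "c * c = 1"
  shows "inner_mu M (eigen_part c w) (eigen_part c w) \<le> inner_mu M w w"
proof -
  have "inner_mu M (eigen_part c w) (eigen_part c w)
      = 1/4 * inner_mu M (\<lambda>x. w x + c * kapp Q w x) (\<lambda>x. w x + c * kapp Q w x)"
    unfolding eigen_part_def inner_mu_def by (simp add: field_simps)
  also have "\<dots> \<le> 1/4 * (2 * inner_mu M w w + 2 * inner_mu M (\<lambda>x. c * kapp Q w x) (\<lambda>x. c * kapp Q w x))"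
    using inner_mu_add_self_le[OF w L2_cmult[OF L2_Q[OF w]]] by simp
  also have "inner_mu M (\<lambda>x. c * kapp Q w x) (\<lambda>x. c * kapp Q w x) = inner_mu M w w"
    using c inner_Q_Q[OF w w] by (simp add: mult.assoc[symmetric])
  finally show ?thesis by simp
qed

text \<open>The point u + z = w + z' has the c-component of u and the (-c)-component of w.\<close>
lemma glue_eigen_parts:
  assumes u: "L2 M u" and w: "L2 M w" and c: "c * c = 1"
  obtains z z' where "L2 M z" "L2 M z'" "(\<lambda>x. u x + z x) = (\<lambda>x. w x + z' x)"
    and "AE x in M. kapp Q z x = - c * z x" "AE x in M. kapp Q z' x = c * z' x"
    and "inner_mu M z z \<le> 2 * inner_mu M u u + 2 * inner_mu M w w"
    and "inner_mu M z' z' \<le> 2 * inner_mu M u u + 2 * inner_mu M w w"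
proof -
  have neg_c: "(- c) * (- c) = 1" using c by simp
  define z where "z = (\<lambda>x. eigen_part (- c) w x - eigen_part (- c) u x)"
  define z' where "z' = (\<lambda>x. eigen_part c u x - eigen_part c w x)"
  have "L2 M z" "L2 M z'"
    unfolding z_def z'_def by (intro L2_diff L2_eigen_part u w)+
  moreover have "(\<lambda>x. u x + z x) = (\<lambda>x. w x + z' x)"
    unfolding z_def z'_def using eigen_part_split[of u _ c] eigen_part_split[of w _ c]
    by (auto simp: algebra_simps)
  moreover have "AE x in M. kapp Q z x = - c * z x"
    using kapp_diff_AE[OF Q_invariant L2_integrable[OF L2_eigen_part[OF w, of "- c"]]
        L2_integrable[OF L2_eigen_part[OF u, of "- c"]]]
      kapp_Q_eigen_part[OF w neg_c] kapp_Q_eigen_part[OF u neg_c]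
    by eventually_elim (simp add: z_def algebra_simps)
  moreover have "AE x in M. kapp Q z' x = c * z' x"
    using kapp_diff_AE[OF Q_invariant L2_integrable[OF L2_eigen_part[OF u, of c]]
        L2_integrable[OF L2_eigen_part[OF w, of c]]]
      kapp_Q_eigen_part[OF u c] kapp_Q_eigen_part[OF w c]
    by eventually_elim (simp add: z'_def algebra_simps)
  moreover have "inner_mu M z z \<le> 2 * inner_mu M u u + 2 * inner_mu M w w"
    using inner_mu_diff_self_le[OF L2_eigen_part[OF w] L2_eigen_part[OF u], of "- c" "- c"]
      eigen_part_norm_le[OF w neg_c] eigen_part_norm_le[OF u neg_c]
    unfolding z_def by linarith
  moreover have "inner_mu M z' z' \<le> 2 * inner_mu M u u + 2 * inner_mu M w w"
    using inner_mu_diff_self_le[OF L2_eigen_part[OF u] L2_eigen_part[OF w], of c c]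
      eigen_part_norm_le[OF u c] eigen_part_norm_le[OF w c]
    unfolding z'_def by linarith
  ultimately show thesis by (rule that)
qed

lemma abs_inner_Q_funpow_le:
  assumes P: "invariant_kernel M P" and h: "L2 M h" and f: "L2 M f"
  shows "\<bar>inner_mu M (kapp Q h) ((kapp P ^^ n) f)\<bar> \<le> (inner_mu M h h + inner_mu M f f) / 2"
proof -
  have "\<bar>inner_mu M (kapp Q h) ((kapp P ^^ n) f)\<bar>
      \<le> (inner_mu M (kapp Q h) (kapp Q h) + inner_mu M ((kapp P ^^ n) f) ((kapp P ^^ n) f)) / 2"
    by (rule abs_inner_mu_le[OF L2_Q[OF h] L2_funpow_kapp[OF P f]])
  also have "\<dots> \<le> (inner_mu M h h + inner_mu M f f) / 2"
    using inner_Q_Q[OF h h] funpow_kapp_norm_le[OF P f, of n] by simp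
  finally show ?thesis .
qed

lemma kapp_Q_centered_AE:
  assumes f: "L2 M f" and Q_f: "AE x in M. kapp Q f x = c * f x"
  shows "AE x in M. kapp Q (\<lambda>x. f x - (\<integral>y. f y \<partial>M)) x = c * (f x - (\<integral>y. f y \<partial>M))"
proof -
  have Q_markov: "markov_kernel M Q" using Q_invariant by (simp add: invariant_kernel_def)
  have "(\<integral>y. f y \<partial>M) = (\<integral>y. kapp Q f y \<partial>M)"
    by (rule integral_kapp[OF Q_invariant L2_integrable[OF f], symmetric])
  also have "\<dots> = (\<integral>y. c * f y \<partial>M)"
    by (rule integral_cong_AE)
       (use Q_f kapp_measurable[OF Q_markov L2_measurable[OF f]] L2_measurable[OF f] in auto)
  finally have mean: "c * (\<integral>y. f y \<partial>M) = (\<integral>y. f y \<partial>M)" by simp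
  show ?thesis
    using AE_space kapp_diff_AE[OF Q_invariant L2_integrable[OF f] integrable_const[of "\<integral>y. f y \<partial>M"]] Q_f
  proof eventually_elim
    case (elim x)
    moreover have "kapp Q (\<lambda>y. \<integral>y. f y \<partial>M) x = (\<integral>y. f y \<partial>M)"
      by (rule kapp_eq_const[OF Q_markov elim(1)]) (rule refl)
    ultimately show ?case by (simp only: right_diff_distrib mean)
  qed
qed

end

section \<open>Partial resolvent sums\<close>

lemma weighted_Cauchy_Schwarz:
  fixes c a :: "'i \<Rightarrow> real"
  assumes "\<And>k. 0 \<le> c k"
  shows "(\<Sum>k\<in>I. c k * a k)\<^sup>2 \<le> (\<Sum>k\<in>I. c k) * (\<Sum>k\<in>I. c k * (a k)\<^sup>2)"
proof -
  have "(\<Sum>k\<in>I. sqrt (c k) * (sqrt (c k) * a k))\<^sup>2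
      \<le> (\<Sum>k\<in>I. (sqrt (c k))\<^sup>2) * (\<Sum>k\<in>I. (sqrt (c k) * a k)\<^sup>2)"
    by (rule Cauchy_Schwarz_ineq_sum)
  then show ?thesis
    using assms by (simp add: power_mult_distrib mult.assoc[symmetric])
qed

locale discounted = involution_kernel +
  fixes lam :: real
  assumes lam_nonneg: "0 \<le> lam" and lam_less_1: "lam < 1"
begin

definition partial_resolvent :: "('a \<Rightarrow> 'a measure) \<Rightarrow> ('a \<Rightarrow> real) \<Rightarrow> nat \<Rightarrow> 'a \<Rightarrow> real" where
  "partial_resolvent P f n = (\<lambda>x. \<Sum>k<n. lam ^ k * (kapp P ^^ k) f x)"

lemma L2_partial_resolvent:
  "invariant_kernel M P \<Longrightarrow> L2 M f \<Longrightarrow> L2 M (partial_resolvent P f n)"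
  unfolding partial_resolvent_def by (intro L2_sum L2_cmult L2_funpow_kapp)

lemma inner_partial_resolvent:
  "invariant_kernel M P \<Longrightarrow> L2 M g \<Longrightarrow> L2 M f \<Longrightarrow>
    inner_mu M g (partial_resolvent P f n) = (\<Sum>k<n. lam ^ k * inner_mu M g ((kapp P ^^ k) f))"
  unfolding partial_resolvent_def by (intro inner_mu_sum_right L2_funpow_kapp)

lemma partial_resolvent_residual_AE:
  assumes P: "invariant_kernel M P" and f: "L2 M f"
  shows "AE x in M. partial_resolvent P f n x - lam * kapp P (partial_resolvent P f n) x
    = f x - lam ^ n * (kapp P ^^ n) f x"
proof (induction n)
  case 0
  then show ?case by (simp add: partial_resolvent_def kapp_def)
next
  case (Suc n)
  have unfold_Suc: "partial_resolvent P f (Suc n)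
      = (\<lambda>x. partial_resolvent P f n x + lam ^ n * (kapp P ^^ n) f x)"
    by (simp add: partial_resolvent_def)
  have "AE x in M. kapp P (partial_resolvent P f (Suc n)) x
      = kapp P (partial_resolvent P f n) x + lam ^ n * kapp P ((kapp P ^^ n) f) x"
    unfolding unfold_Suc
    using kapp_add_AE[OF P L2_integrable[OF L2_partial_resolvent[OF P f]]
        L2_integrable[OF L2_cmult[OF L2_funpow_kapp[OF P f]]]]
    by simp
  with Suc show ?case
    by eventually_elim (simp add: unfold_Suc algebra_simps)
qed

lemma sum_power_lam_le: "(\<Sum>k<n. lam ^ k) \<le> 1 / (1 - lam)"
proof -
  have "(\<Sum>k<n. lam ^ k) = (1 - lam ^ n) / (1 - lam)"
    using lam_less_1 by (simp add: sum_gp_strict)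
  then show ?thesis
    using lam_nonneg lam_less_1 by (simp add: divide_right_mono)
qed

lemma partial_resolvent_norm_le:
  assumes P: "invariant_kernel M P" and f: "L2 M f"
  shows "inner_mu M (partial_resolvent P f n) (partial_resolvent P f n) \<le> inner_mu M f f / (1 - lam)\<^sup>2"
proof -
  define G where "G = (\<Sum>k<n. lam ^ k)"
  have G_nonneg: "0 \<le> G" unfolding G_def using lam_nonneg by (simp add: sum_nonneg)
  have G_le: "G \<le> 1 / (1 - lam)"
    unfolding G_def by (rule sum_power_lam_le)
  note iterate_L2 = L2_funpow_kapp[OF P f]
  have iterate_square: "integrable M (\<lambda>x. ((kapp P ^^ k) f x)\<^sup>2)" for k
    using iterate_L2 by (simp add: L2_def)
  have "inner_mu M (partial_resolvent P f n) (partial_resolvent P f n)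
      \<le> (\<integral>x. G * (\<Sum>k<n. lam ^ k * ((kapp P ^^ k) f x)\<^sup>2) \<partial>M)"
    unfolding inner_mu_def partial_resolvent_def
  proof (rule integral_mono)
    show "integrable M (\<lambda>x. (\<Sum>k<n. lam ^ k * (kapp P ^^ k) f x) * (\<Sum>k<n. lam ^ k * (kapp P ^^ k) f x))"
      using L2_integrable_mult[OF L2_partial_resolvent[OF P f] L2_partial_resolvent[OF P f], of n]
      by (simp add: partial_resolvent_def)
    show "integrable M (\<lambda>x. G * (\<Sum>k<n. lam ^ k * ((kapp P ^^ k) f x)\<^sup>2))"
      using iterate_square by simp
    fix x
    show "(\<Sum>k<n. lam ^ k * (kapp P ^^ k) f x) * (\<Sum>k<n. lam ^ k * (kapp P ^^ k) f x)
        \<le> G * (\<Sum>k<n. lam ^ k * ((kapp P ^^ k) f x)\<^sup>2)"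
      using weighted_Cauchy_Schwarz[of "\<lambda>k. lam ^ k" "\<lambda>k. (kapp P ^^ k) f x" "{..<n}"] lam_nonneg
      by (simp add: G_def power2_eq_square)
  qed
  also have "\<dots> = G * (\<Sum>k<n. lam ^ k * inner_mu M ((kapp P ^^ k) f) ((kapp P ^^ k) f))"
    using iterate_square by (simp add: inner_mu_def power2_eq_square)
  also have "\<dots> \<le> G * G * inner_mu M f f"
    unfolding G_def sum_distrib_right mult.assoc
    using funpow_kapp_norm_le[OF P f] lam_nonneg G_nonneg
    by (intro mult_left_mono sum_mono) (auto simp: G_def intro: mult_left_mono)
  also have "\<dots> \<le> (1 / (1 - lam)) * (1 / (1 - lam)) * inner_mu M f f"
    using G_le G_nonneg inner_mu_self_nonneg[of M f] lam_less_1
    by (intro mult_right_mono mult_mono) auto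
  also have "\<dots> = inner_mu M f f / (1 - lam)\<^sup>2"
    by (simp add: power2_eq_square)
  finally show ?thesis .
qed

lemma
  assumes P: "invariant_kernel M P" and g: "L2 M g"
  shows summable_discounted_correlation: "summable (\<lambda>k. lam ^ k * inner_mu M g ((kapp P ^^ k) g))"
    and inner_partial_resolvent_limit: "(\<lambda>n. inner_mu M g (partial_resolvent P g n))
      \<longlonglongrightarrow> (\<Sum>k. lam ^ k * inner_mu M g ((kapp P ^^ k) g))"
proof -
  have bound: "norm (lam ^ k * inner_mu M g ((kapp P ^^ k) g)) \<le> inner_mu M g g * lam ^ k" for k
  proof -
    have "\<bar>inner_mu M g ((kapp P ^^ k) g)\<bar>
        \<le> (inner_mu M g g + inner_mu M ((kapp P ^^ k) g) ((kapp P ^^ k) g)) / 2"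
      by (rule abs_inner_mu_le[OF g L2_funpow_kapp[OF P g]])
    also have "\<dots> \<le> inner_mu M g g"
      using funpow_kapp_norm_le[OF P g, of k] by simp
    finally have "\<bar>inner_mu M g ((kapp P ^^ k) g)\<bar> \<le> inner_mu M g g" .
    then show ?thesis
      using lam_nonneg by (simp add: abs_mult mult.commute mult_left_mono)
  qed
  have "summable (\<lambda>k. inner_mu M g g * lam ^ k)"
    using lam_nonneg lam_less_1 by (intro summable_mult summable_geometric) simp
  then show summable: "summable (\<lambda>k. lam ^ k * inner_mu M g ((kapp P ^^ k) g))"
    using bound by (rule summable_comparison_test')
  show "(\<lambda>n. inner_mu M g (partial_resolvent P g n)) \<longlonglongrightarrow> (\<Sum>k. lam ^ k * inner_mu M g ((kapp P ^^ k) g))"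
    using summable_LIMSEQ[OF summable] by (simp add: inner_partial_resolvent[OF P g g])
qed

lemma var_lambda_eq_suminf:
  assumes P: "invariant_kernel M P" and f: "L2 M f"
  defines "f0 \<equiv> \<lambda>x. f x - (\<integral>y. f y \<partial>M)"
  shows "var_lambda M lam f P
    = 2 * (\<Sum>k. lam ^ k * inner_mu M f0 ((kapp P ^^ k) f0)) - inner_mu M f0 f0"
proof -
  have "L2 M f0"
    unfolding f0_def by (intro L2_diff f L2_const finite_measure_axioms)
  note summable = summable_discounted_correlation[OF P this]
  have "(\<Sum>k. lam ^ Suc k * inner_mu M f0 ((kapp P ^^ Suc k) f0))
      = (\<Sum>k. lam ^ k * inner_mu M f0 ((kapp P ^^ k) f0)) - inner_mu M f0 f0"
    using suminf_split_head[OF summable] by simp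
  then show ?thesis
    unfolding var_lambda_def Let_def f0_def[symmetric] by simp
qed

end

section \<open>The saddle-point comparison\<close>

locale Q_eigenfunction = discounted +
  fixes s :: real and f :: "'a \<Rightarrow> real"
  assumes s_square: "s * s = 1" and L2_f: "L2 M f" and Q_f: "AE x in M. kapp Q f x = s * f x"
begin

definition form :: "('a \<Rightarrow> 'a measure) \<Rightarrow> ('a \<Rightarrow> real) \<Rightarrow> ('a \<Rightarrow> real) \<Rightarrow> real" where
  "form P h w = s * (inner_mu M h (kapp Q w) - lam * inner_mu M h (kapp Q (kapp P w)))"

text \<open>Since form P h (I - lam P)^-1 f = <h, f>, the resolvent is the critical point of saddle P.\<close>
definition saddle :: "('a \<Rightarrow> 'a measure) \<Rightarrow> ('a \<Rightarrow> real) \<Rightarrow> real" where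
  "saddle P m = 2 * inner_mu M f m - form P m m"

definition resolvent_bound :: real where
  "resolvent_bound = inner_mu M f f / (1 - lam)\<^sup>2"

lemma form_add_left:
  assumes P: "invariant_kernel M P" and "L2 M h1" "L2 M h2" "L2 M w"
  shows "form P (\<lambda>x. h1 x + h2 x) w = form P h1 w + form P h2 w"
  using assms inner_mu_add_left[OF L2_Q[OF L2_kapp[OF P]]] inner_mu_add_left[OF L2_Q]
  by (simp add: form_def algebra_simps)

lemma form_commute:
  assumes P: "reversible P" and "L2 M h" "L2 M w"
  shows "form P h w = form P w h"
  using assms inner_Q_swap[of h w] inner_QP_commute[OF P]
  by (simp add: form_def inner_mu_commute[of M "kapp Q h" w])

lemma form_expand:
  assumes P: "reversible P" and u: "L2 M u" and z: "L2 M z"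
  shows "form P (\<lambda>x. u x + z x) (\<lambda>x. u x + z x) = form P u u + 2 * form P z u + form P z z"
proof -
  note P_invariant = reversible_invariant[OF P] and uz = L2_add[OF u z]
  have "form P (\<lambda>x. u x + z x) (\<lambda>x. u x + z x)
      = form P (\<lambda>x. u x + z x) u + form P (\<lambda>x. u x + z x) z"
    using form_commute[OF P uz] form_add_left[OF P_invariant u z uz]
      form_commute[OF P u uz] form_commute[OF P z uz] by simp
  also have "\<dots> = form P u u + 2 * form P z u + form P z z"
    using form_add_left[OF P_invariant u z u] form_add_left[OF P_invariant u z z]
      form_commute[OF P u z] by simp
  finally show ?thesis .
qed

lemma form_partial_resolvent:
  assumes P: "invariant_kernel M P" and h: "L2 M h"
  shows "form P h (partial_resolvent P f n)
    = inner_mu M h f - s * lam ^ n * inner_mu M (kapp Q h) ((kapp P ^^ n) f)"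
proof -
  define u where "u = partial_resolvent P f n"
  have u: "L2 M u" "L2 M (kapp P u)"
    unfolding u_def by (intro L2_partial_resolvent L2_kapp P L2_f)+
  note Qh = L2_Q[OF h] and v = L2_funpow_kapp[OF P L2_f, of n]
  have "inner_mu M h (kapp Q u) - lam * inner_mu M h (kapp Q (kapp P u))
      = inner_mu M (kapp Q h) (\<lambda>x. u x - lam * kapp P u x)"
    using inner_Q_swap[OF h u(1)] inner_Q_swap[OF h u(2)]
    by (simp add: inner_mu_diff_right[OF Qh u(1) L2_cmult[OF u(2)]])
  also have "\<dots> = inner_mu M (kapp Q h) (\<lambda>x. f x - lam ^ n * (kapp P ^^ n) f x)"
    using partial_resolvent_residual_AE[OF P L2_f, of n] Qh u v L2_f
    by (intro inner_mu_cong_AE L2_diff L2_cmult) (auto simp: u_def)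
  also have "\<dots> = inner_mu M (kapp Q h) f - lam ^ n * inner_mu M (kapp Q h) ((kapp P ^^ n) f)"
    by (simp add: inner_mu_diff_right[OF Qh L2_f L2_cmult[OF v]])
  also have "inner_mu M (kapp Q h) f = s * inner_mu M h f"
    using inner_Q_swap[OF h L2_f] Q_f h L2_Q[OF L2_f] L2_f
    by (simp add: inner_mu_cong_AE[OF h L2_Q[OF L2_f] h L2_cmult[OF L2_f], of s])
  finally have "inner_mu M h (kapp Q u) - lam * inner_mu M h (kapp Q (kapp P u))
      = s * inner_mu M h f - lam ^ n * inner_mu M (kapp Q h) ((kapp P ^^ n) f)" .
  then have "form P h u = (s * s) * inner_mu M h f - s * lam ^ n * inner_mu M (kapp Q h) ((kapp P ^^ n) f)"
    unfolding form_def by (simp only:) (simp add: algebra_simps)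
  then show ?thesis
    using s_square by (simp add: u_def)
qed

lemma form_self_eigen:
  assumes z: "L2 M z" and Q_z: "AE x in M. kapp Q z x = c * z x"
  shows "form P z z = s * c * inner_mu M z z - s * lam * inner_mu M z (kapp Q (kapp P z))"
proof -
  have "inner_mu M z (kapp Q z) = c * inner_mu M z z"
    using inner_mu_cong_AE[OF z L2_Q[OF z] z L2_cmult[OF z]] Q_z by simp
  then show ?thesis by (simp add: form_def algebra_simps)
qed

lemma abs_s: "\<bar>s\<bar> = 1"
  using s_square square_eq_1_iff[of s] by auto

lemma abs_lam_inner_QP_le:
  assumes P: "reversible P" and z: "L2 M z"
  shows "\<bar>s * lam * inner_mu M z (kapp Q (kapp P z))\<bar> \<le> inner_mu M z z"
proof -
  have "\<bar>s * lam * inner_mu M z (kapp Q (kapp P z))\<bar> \<le> lam * inner_mu M z z"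
    using abs_inner_QP_le[OF P z] lam_nonneg by (simp add: abs_mult abs_s mult_left_mono)
  also have "\<dots> \<le> inner_mu M z z"
    using lam_nonneg lam_less_1 inner_mu_self_nonneg[of M z] by (intro mult_left_le_one_le) auto
  finally show ?thesis .
qed

lemma form_nonneg_eigen:
  assumes P: "reversible P" and z: "L2 M z" and Q_z: "AE x in M. kapp Q z x = s * z x"
  shows "0 \<le> form P z z"
  using form_self_eigen[OF z Q_z] abs_lam_inner_QP_le[OF P z] s_square by (simp add: abs_le_iff)

lemma form_nonpos_eigen:
  assumes P: "reversible P" and z: "L2 M z" and Q_z: "AE x in M. kapp Q z x = - s * z x"
  shows "form P z z \<le> 0"
  using form_self_eigen[OF z Q_z] abs_lam_inner_QP_le[OF P z] s_square by (simp add: abs_le_iff)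

lemma saddle_shift:
  fixes n :: nat
  assumes P: "reversible P" and z: "L2 M z"
  defines "u \<equiv> partial_resolvent P f n" and "v \<equiv> (kapp P ^^ n) f"
  shows "saddle P (\<lambda>x. u x + z x) = inner_mu M f u
    + s * lam ^ n * (inner_mu M (kapp Q u) v + 2 * inner_mu M (kapp Q z) v) - form P z z"
proof -
  note P_invariant = reversible_invariant[OF P]
  have u: "L2 M u" unfolding u_def by (rule L2_partial_resolvent[OF P_invariant L2_f])
  have resolvent: "form P h u = inner_mu M h f - s * lam ^ n * inner_mu M (kapp Q h) v"
    if "L2 M h" for h
    unfolding u_def v_def by (rule form_partial_resolvent[OF P_invariant that])
  show ?thesis
    unfolding saddle_def form_expand[OF P u z] inner_mu_add_right[OF L2_f u z]
      resolvent[OF u] resolvent[OF z]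
    by (simp add: inner_mu_commute[of M f] algebra_simps)
qed

lemma abs_saddle_error_le:
  fixes n :: nat
  assumes P: "invariant_kernel M P" and z: "L2 M z" and z_norm: "inner_mu M z z \<le> 4 * resolvent_bound"
  defines "u \<equiv> partial_resolvent P f n" and "v \<equiv> (kapp P ^^ n) f"
  shows "\<bar>inner_mu M (kapp Q u) v + 2 * inner_mu M (kapp Q z) v\<bar>
    \<le> (9 * resolvent_bound + 3 * inner_mu M f f) / 2"
proof -
  have "\<bar>inner_mu M (kapp Q u) v\<bar> \<le> (inner_mu M u u + inner_mu M f f) / 2"
    unfolding u_def v_def by (rule abs_inner_Q_funpow_le[OF P L2_partial_resolvent[OF P L2_f] L2_f])
  moreover have "inner_mu M u u \<le> resolvent_bound"
    unfolding u_def resolvent_bound_def by (rule partial_resolvent_norm_le[OF P L2_f])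
  moreover have "\<bar>inner_mu M (kapp Q z) v\<bar> \<le> (inner_mu M z z + inner_mu M f f) / 2"
    unfolding v_def by (rule abs_inner_Q_funpow_le[OF P z L2_f])
  moreover have "\<bar>2 * inner_mu M (kapp Q z) v\<bar> = 2 * \<bar>inner_mu M (kapp Q z) v\<bar>"
    by (simp add: abs_mult)
  ultimately show ?thesis
    using z_norm abs_triangle_ineq[of "inner_mu M (kapp Q u) v" "2 * inner_mu M (kapp Q z) v"]
    by argo
qed

lemma saddle_mono:
  assumes "s * inner_mu M m (kapp Q (kapp Pa m)) \<le> s * inner_mu M m (kapp Q (kapp Pb m))"
  shows "saddle Pa m \<le> saddle Pb m"
proof -
  have "saddle Pb m - saddle Pa m
      = lam * (s * inner_mu M m (kapp Q (kapp Pb m)) - s * inner_mu M m (kapp Q (kapp Pa m)))"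
    by (simp add: saddle_def form_def algebra_simps)
  also have "\<dots> \<ge> 0"
    using assms lam_nonneg by simp
  finally show ?thesis by simp
qed

lemma inner_partial_resolvent_le:
  assumes Pa: "reversible Pa" and Pb: "reversible Pb"
    and ordered: "\<And>m. L2 M m \<Longrightarrow>
      s * inner_mu M m (kapp Q (kapp Pa m)) \<le> s * inner_mu M m (kapp Q (kapp Pb m))"
  shows "inner_mu M f (partial_resolvent Pa f n)
    \<le> inner_mu M f (partial_resolvent Pb f n) + lam ^ n * (9 * resolvent_bound + 3 * inner_mu M f f)"
proof -
  note Pa_invariant = reversible_invariant[OF Pa] and Pb_invariant = reversible_invariant[OF Pb]
  define ua where "ua = partial_resolvent Pa f n"
  define ub where "ub = partial_resolvent Pb f n"
  have ua: "L2 M ua" and ub: "L2 M ub"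
    unfolding ua_def ub_def by (intro L2_partial_resolvent Pa_invariant Pb_invariant L2_f)+
  have "inner_mu M ua ua \<le> resolvent_bound" "inner_mu M ub ub \<le> resolvent_bound"
    unfolding ua_def ub_def resolvent_bound_def
    by (intro partial_resolvent_norm_le Pa_invariant Pb_invariant L2_f)+
  moreover obtain za zb where za: "L2 M za" and zb: "L2 M zb"
    and glued: "(\<lambda>x. ua x + za x) = (\<lambda>x. ub x + zb x)"
    and Q_za: "AE x in M. kapp Q za x = - s * za x" and Q_zb: "AE x in M. kapp Q zb x = s * zb x"
    and "inner_mu M za za \<le> 2 * inner_mu M ua ua + 2 * inner_mu M ub ub"
    and "inner_mu M zb zb \<le> 2 * inner_mu M ua ua + 2 * inner_mu M ub ub"
    by (rule glue_eigen_parts[OF ua ub s_square])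
  ultimately have za_norm: "inner_mu M za za \<le> 4 * resolvent_bound"
    and zb_norm: "inner_mu M zb zb \<le> 4 * resolvent_bound"
    by linarith+
  define ea where "ea = inner_mu M (kapp Q ua) ((kapp Pa ^^ n) f) + 2 * inner_mu M (kapp Q za) ((kapp Pa ^^ n) f)"
  define eb where "eb = inner_mu M (kapp Q ub) ((kapp Pb ^^ n) f) + 2 * inner_mu M (kapp Q zb) ((kapp Pb ^^ n) f)"
  have "inner_mu M f ua + s * lam ^ n * ea \<le> saddle Pa (\<lambda>x. ua x + za x)"
    using saddle_shift[OF Pa za, of n] form_nonpos_eigen[OF Pa za Q_za]
    unfolding ua_def ea_def by linarith
  also have "\<dots> \<le> saddle Pb (\<lambda>x. ua x + za x)"
    by (rule saddle_mono[OF ordered[OF L2_add[OF ua za]]])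
  also have "\<dots> \<le> inner_mu M f ub + s * lam ^ n * eb"
    using saddle_shift[OF Pb zb, of n] form_nonneg_eigen[OF Pb zb Q_zb]
    unfolding glued ub_def eb_def by linarith
  finally have "inner_mu M f ua \<le> inner_mu M f ub + s * lam ^ n * (eb - ea)"
    by (simp add: algebra_simps)
  also have "s * lam ^ n * (eb - ea) \<le> lam ^ n * (9 * resolvent_bound + 3 * inner_mu M f f)"
  proof -
    have "\<bar>eb - ea\<bar> \<le> 9 * resolvent_bound + 3 * inner_mu M f f"
      using abs_saddle_error_le[OF Pa_invariant za za_norm, of n]
        abs_saddle_error_le[OF Pb_invariant zb zb_norm, of n]
      unfolding ea_def eb_def ua_def ub_def by argo
    then have "\<bar>s * lam ^ n * (eb - ea)\<bar> \<le> lam ^ n * (9 * resolvent_bound + 3 * inner_mu M f f)"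
      using abs_s lam_nonneg by (simp add: abs_mult mult_left_mono)
    then show ?thesis by argo
  qed
  finally show ?thesis unfolding ua_def ub_def by simp
qed

end

context discounted
begin

lemma var_lambda_le_if_eigen:
  assumes Pa: "reversible Pa" and Pb: "reversible Pb" and s: "s * s = 1"
    and f: "L2 M f" and Q_f: "AE x in M. kapp Q f x = s * f x"
    and ordered: "\<And>m. L2 M m \<Longrightarrow>
      s * inner_mu M m (kapp Q (kapp Pa m)) \<le> s * inner_mu M m (kapp Q (kapp Pb m))"
  shows "var_lambda M lam f Pa \<le> var_lambda M lam f Pb"
proof -
  note Pa_invariant = reversible_invariant[OF Pa] and Pb_invariant = reversible_invariant[OF Pb]
  define f0 where "f0 = (\<lambda>x. f x - (\<integral>y. f y \<partial>M))"
  have f0: "L2 M f0" unfolding f0_def by (intro L2_diff f L2_const finite_measure_axioms)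
  interpret Q_eigenfunction M Q lam s f0
    using s f0 kapp_Q_centered_AE[OF f Q_f] by unfold_locales (simp_all add: f0_def)
  define K where "K = 9 * resolvent_bound + 3 * inner_mu M f0 f0"
  have "(\<lambda>n. inner_mu M f0 (partial_resolvent Pb f0 n) + lam ^ n * K)
      \<longlonglongrightarrow> (\<Sum>k. lam ^ k * inner_mu M f0 ((kapp Pb ^^ k) f0)) + 0 * K"
    using lam_nonneg lam_less_1
    by (intro tendsto_add tendsto_mult inner_partial_resolvent_limit[OF Pb_invariant f0]
        LIMSEQ_power_zero tendsto_const) simp
  then have "(\<Sum>k. lam ^ k * inner_mu M f0 ((kapp Pa ^^ k) f0))
      \<le> (\<Sum>k. lam ^ k * inner_mu M f0 ((kapp Pb ^^ k) f0))"
    using inner_partial_resolvent_limit[OF Pa_invariant f0]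
      inner_partial_resolvent_le[OF Pa Pb ordered, folded K_def]
    by (intro LIMSEQ_le) auto
  then show ?thesis
    using var_lambda_eq_suminf[OF Pa_invariant f] var_lambda_eq_suminf[OF Pb_invariant f]
    unfolding f0_def by simp
qed

end

theorem corollary2p10:
  fixes mu :: "'a measure" and Q P1 P2 :: "'a \<Rightarrow> 'a measure"
  assumes "prob_space mu"
    and "\<forall>z\<in>space mu. {z} \<in> sets mu"
    and "markov_kernel mu Q" and "isometric_involution mu Q" and "mu \<bind> Q = mu"
    and "markov_kernel mu P1" and "markov_kernel mu P2"
    and "muQ_reversible mu Q P1" and "muQ_reversible mu Q P2"
    and "(\<forall>z\<in>space mu. \<forall>A\<in>sets mu.
            measure (kcomp P1 Q z) (A - {z}) \<ge> measure (kcomp P2 Q z) (A - {z}))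
       \<or> (\<forall>z\<in>space mu. \<forall>A\<in>sets mu.
            measure (kcomp Q P1 z) (A - {z}) \<ge> measure (kcomp Q P2 z) (A - {z}))"
    and "0 \<le> lam" and "lam < 1"
  shows "(\<forall>f. L2 mu f \<longrightarrow> (AE z in mu. kapp Q f z = f z) \<longrightarrow>
            var_lambda mu lam f P1 \<le> var_lambda mu lam f P2)
       \<and> (\<forall>f. L2 mu f \<longrightarrow> (AE z in mu. kapp Q f z = - f z) \<longrightarrow>
            var_lambda mu lam f P1 \<ge> var_lambda mu lam f P2)"
proof -
  interpret discounted mu Q lam
    using assms(3,4,5,11,12)
    by (intro discounted.intro involution_kernel.intro discounted_axioms.intro
        involution_kernel_axioms.intro assms(1)) (simp_all add: invariant_kernel_def)
  have P1: "reversible P1" and P2: "reversible P2"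
    using assms(6-9) by (simp_all add: reversible_def)
  have ordered: "inner_mu mu m (kapp Q (kapp P1 m)) \<le> inner_mu mu m (kapp Q (kapp P2 m))"
    if "L2 mu m" for m
    using assms(10) inner_QP_mono_PQ[OF P1 P2 assms(2) _ that] inner_QP_mono_QP[OF P1 P2 assms(2) _ that]
    by blast
  show ?thesis
  proof (intro conjI allI impI)
    fix f assume "L2 mu f" "AE z in mu. kapp Q f z = f z"
    then show "var_lambda mu lam f P1 \<le> var_lambda mu lam f P2"
      using ordered by (intro var_lambda_le_if_eigen[OF P1 P2, of 1]) simp_all
  next
    fix f assume "L2 mu f" "AE z in mu. kapp Q f z = - f z"
    then show "var_lambda mu lam f P2 \<le> var_lambda mu lam f P1"
      using ordered by (intro var_lambda_le_if_eigen[OF P2 P1, of "-1"]) simp_all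
  qed
qed

end
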